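(* Let $X_1,\dots,X_n$ be a Hall–Grayson–Grossman basis of vector fields on $\mathbb{R}^n$ (for the free nilpotent Lie algebra of rank $r\ge2$ and step $s\ge2$), and let $\Psi(x)=e^{x_1X_1}\circ e^{x_2X_2}\circ\cdots\circ e^{x_nX_n}(0)$, where $e^{tX}$ denotes the flow of the vector field $X$ at time $t$. Then $\Psi(x)=x$ for all $x\in\mathbb{R}^n$.
   Context: Multi-indices $\mathbb{N}^n$: $|\alpha|$, $\alpha!$, $x^\alpha$. Hall basis of the free nilpotent Lie algebra $\mathfrak g$ (rank $r$, step $s$, dimension $n$): take a basis $X_1,\dots,X_r$ of the first layer (degree 1); inductively the degree-$d$ elements are brackets $[X_i,X_j]$ of earlier elements with $i>j$, $d(i)+d(j)=d$, and, if $X_i$ was constructed as $[X_h,X_k]$, then $k\le j$; list them after lower-degree elements. Strings: $(\ell)$ for $\ell\le r$; for $X_\ell=[X_a,X_b]$, the string of $a$ followed by $b$. With string $(\ell_0,\dots,\ell_h)$, $I(\ell)_j=\#\{1\le p\le h:\ell_p=j\}$; $j\prec\ell$ iff the string of $j$ is an initial segment of that of $\ell$. The Hall–Grayson–Grossman basis is the family of vector fields on $\mathbb{R}^n$ given by $X_i=\sum_{\ell:\,i\prec\ell}\frac{(-1)^{|I(\ell)|}}{I(\ell)!}x^{I(\ell)}\frac{\partial}{\partial x_\ell}$ for $i=1,\dots,r$, and, for $\ell>r$ with $X_\ell$ constructed in the Hall algorithm as $[X_a,X_b]$, $X_\ell=[X_a,X_b]$ (Lie bracket of vector fields). *)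

theory Defs
  imports "HOL-Analysis.Analysis"
begin

text \<open>Points of R^n are functions nat => real; only coordinates 1..n are meaningful.
  Vector fields are maps from points to points (the vector of components).\<close>

type_synonym point = "nat \<Rightarrow> real"
type_synonym vfield = "point \<Rightarrow> point"

text \<open>Hall basis data: for an index l with r < l, P l = (a, b) means X_l = [X_a, X_b].\<close>

fun hall_string :: "nat \<Rightarrow> (nat \<Rightarrow> nat \<times> nat) \<Rightarrow> nat \<Rightarrow> nat list" where
  "hall_string r P l =
     (if l \<le> r then [l]
      else if fst (P l) < l then hall_string r P (fst (P l)) @ [snd (P l)] else [])"

fun hall_deg :: "nat \<Rightarrow> (nat \<Rightarrow> nat \<times> nat) \<Rightarrow> nat \<Rightarrow> nat" where
  "hall_deg r P l =
     (if l \<le> r then 1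
      else if fst (P l) < l \<and> snd (P l) < l
           then hall_deg r P (fst (P l)) + hall_deg r P (snd (P l)) else 0)"

definition hall_pairs :: "nat \<Rightarrow> nat \<Rightarrow> nat \<Rightarrow> (nat \<Rightarrow> nat \<times> nat) \<Rightarrow> (nat \<times> nat) set" where
  "hall_pairs r s n P =
     {(i, j). 1 \<le> j \<and> j < i \<and> i \<le> n \<and> hall_deg r P i + hall_deg r P j \<le> s
              \<and> (r < i \<longrightarrow> snd (P i) \<le> j)}"

text \<open>P, n describe (an enumeration of) the Hall basis of the free nilpotent Lie algebra
  of rank r and step s: indices 1..r are the generators; indices r+1..n are brackets
  of earlier elements, in bijection with all admissible Hall pairs; elements are listed
  by nondecreasing degree (the order within a degree is arbitrary).\<close>

definition hall_basis :: "nat \<Rightarrow> nat \<Rightarrow> nat \<Rightarrow> (nat \<Rightarrow> nat \<times> nat) \<Rightarrow> bool" where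
  "hall_basis r s n P \<longleftrightarrow>
     r \<le> n \<and>
     (\<forall>l\<in>{r<..n}. snd (P l) < fst (P l) \<and> fst (P l) < l) \<and>
     bij_betw P {r<..n} (hall_pairs r s n P) \<and>
     (\<forall>l l'. 1 \<le> l \<and> l < l' \<and> l' \<le> n \<longrightarrow> hall_deg r P l \<le> hall_deg r P l')"

text \<open>Multi-index I(l): I(l)_j = number of p in 1..h with l_p = j, for string (l_0,...,l_h).\<close>

definition hall_I :: "nat \<Rightarrow> (nat \<Rightarrow> nat \<times> nat) \<Rightarrow> nat \<Rightarrow> nat \<Rightarrow> nat" where
  "hall_I r P l j = length (filter (\<lambda>q. q = j) (tl (hall_string r P l)))"

definition hall_prec :: "nat \<Rightarrow> (nat \<Rightarrow> nat \<times> nat) \<Rightarrow> nat \<Rightarrow> nat \<Rightarrow> bool" where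
  "hall_prec r P j l \<longleftrightarrow>
     take (length (hall_string r P j)) (hall_string r P l) = hall_string r P j"

definition hgg_gen :: "nat \<Rightarrow> nat \<Rightarrow> (nat \<Rightarrow> nat \<times> nat) \<Rightarrow> nat \<Rightarrow> vfield" where
  "hgg_gen r n P i x = (\<lambda>l.
     if 1 \<le> l \<and> l \<le> n \<and> hall_prec r P i l then
       (-1) ^ (\<Sum>j=1..n. hall_I r P l j) / (\<Prod>j=1..n. fact (hall_I r P l j))
         * (\<Prod>j=1..n. x j ^ hall_I r P l j)
     else 0)"

definition pdiff :: "nat \<Rightarrow> (point \<Rightarrow> real) \<Rightarrow> point \<Rightarrow> real" where
  "pdiff k f x = deriv (\<lambda>t. f (x(k := t))) (x k)"

definition lie_bracket :: "nat \<Rightarrow> vfield \<Rightarrow> vfield \<Rightarrow> vfield" where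
  "lie_bracket n A B x = (\<lambda>l.
     \<Sum>k=1..n. A x k * pdiff k (\<lambda>y. B y l) x - B x k * pdiff k (\<lambda>y. A y l) x)"

definition hgg_fields :: "nat \<Rightarrow> nat \<Rightarrow> (nat \<Rightarrow> nat \<times> nat) \<Rightarrow> (nat \<Rightarrow> vfield) \<Rightarrow> bool" where
  "hgg_fields r n P X \<longleftrightarrow>
     (\<forall>i\<in>{1..r}. X i = hgg_gen r n P i) \<and>
     (\<forall>l\<in>{r<..n}. X l = lie_bracket n (X (fst (P l))) (X (snd (P l))))"

definition flow :: "vfield \<Rightarrow> real \<Rightarrow> point \<Rightarrow> point" where
  "flow V t p = (THE q. \<exists>\<gamma>::real \<Rightarrow> point. \<gamma> 0 = p \<and> \<gamma> t = q \<and>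
      (\<forall>\<tau>\<in>{min 0 t..max 0 t}. \<forall>k.
         ((\<lambda>\<sigma>. \<gamma> \<sigma> k) has_real_derivative V (\<gamma> \<tau>) k) (at \<tau> within {min 0 t..max 0 t})))"

definition hgg_Psi :: "nat \<Rightarrow> (nat \<Rightarrow> vfield) \<Rightarrow> point \<Rightarrow> point" where
  "hgg_Psi n X x = foldr (\<lambda>i p. flow (X i) (x i) p) [1..<n+1] (\<lambda>_. 0)"

end

theory Submission
  imports Defs "HOL-Library.Multiset"
begin

text \<open>Every \<open>X\<^sub>l\<close> is triangular (its \<open>k\<close>-th component depends only on \<open>x\<^sub>1, \<dots>, x\<^sub>k\<^sub>-\<^sub>1\<close>),
  and on the subspace \<open>x\<^sub>1 = \<dots> = x\<^sub>l\<^sub>-\<^sub>1 = 0\<close> it is the constant field \<open>\<partial>\<^sub>l\<close>. The second fact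
  comes from an induction along the Hall construction showing that, near that subspace, \<open>X\<^sub>l\<close> is
  given by explicit signed monomials: there the bracket \<open>[X\<^sub>a, X\<^sub>b]\<close> reduces to \<open>-\<partial>\<^sub>b X\<^sub>a\<close>, and
  differentiating the monomials of \<open>X\<^sub>a\<close> in \<open>x\<^sub>b\<close> gives those of \<open>X\<^sub>l\<close>. That only the \<open>\<partial>\<^sub>l\<close> term
  survives on the subspace is a combinatorial property of Hall strings: an element is determined
  by the first letter of its string and the letters smaller than itself.
  Hence the flow of \<open>X\<^sub>l\<close> from a point of the subspace is the straight line in direction \<open>e\<^sub>l\<close>,
  and \<open>\<Psi>(x)\<close> fills in the coordinates \<open>x\<^sub>n, \<dots>, x\<^sub>1\<close> one at a time.\<close>

definition vanishing_below :: "nat \<Rightarrow> point set" where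
  "vanishing_below l = {y. \<forall>j. 1 \<le> j \<and> j < l \<longrightarrow> y j = 0}"

definition basis_point :: "nat \<Rightarrow> point" where
  "basis_point l = (\<lambda>m. if m = l then 1 else 0)"

lemma vanishing_below_antimono: "i \<le> j \<Longrightarrow> vanishing_below j \<subseteq> vanishing_below i"
  unfolding vanishing_below_def by auto

lemma fun_upd_in_vanishing_below:
  "y \<in> vanishing_below j \<Longrightarrow> j \<le> k \<Longrightarrow> y(k := t) \<in> vanishing_below j"
  unfolding vanishing_below_def by auto

definition triangular :: "vfield \<Rightarrow> bool" where
  "triangular V \<longleftrightarrow> (\<forall>k y y'. (\<forall>j. 1 \<le> j \<and> j < k \<longrightarrow> y j = y' j) \<longrightarrow> V y k = V y' k)"

lemma pdiff_cong:
  "(\<And>t. f (y(k := t)) = g (y(k := t))) \<Longrightarrow> pdiff k f y = pdiff k g y"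
  unfolding pdiff_def by simp

lemma pdiff_eq_0_if_const: "(\<And>t. f (y(k := t)) = c) \<Longrightarrow> pdiff k f y = 0"
  unfolding pdiff_def by simp

lemma pdiff_eqI:
  "((\<lambda>t. f (y(k := t))) has_real_derivative D) (at (y k)) \<Longrightarrow> pdiff k f y = D"
  unfolding pdiff_def by (rule DERIV_imp_deriv)

lemma triangular_pdiff_eq_0: "triangular V \<Longrightarrow> k \<le> m \<Longrightarrow> pdiff m (\<lambda>z. V z k) y = 0"
  by (rule pdiff_eq_0_if_const[where c = "V y k"]) (simp add: triangular_def)

lemma triangular_lie_bracket:
  assumes A: "triangular A" and B: "triangular B"
  shows "triangular (lie_bracket n A B)"
  unfolding triangular_def
proof (intro allI impI)
  fix k and y y' :: point
  assume agree: "\<forall>j. 1 \<le> j \<and> j < k \<longrightarrow> y j = y' j"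
  have "A y m * pdiff m (\<lambda>z. B z k) y - B y m * pdiff m (\<lambda>z. A z k) y
      = A y' m * pdiff m (\<lambda>z. B z k) y' - B y' m * pdiff m (\<lambda>z. A z k) y'"
    if "m \<in> {1..n}" for m
  proof (cases "k \<le> m")
    case True
    then show ?thesis using triangular_pdiff_eq_0[OF A] triangular_pdiff_eq_0[OF B] by simp
  next
    case False
    have "pdiff m (\<lambda>z. V z k) y = pdiff m (\<lambda>z. V z k) y'" if "triangular V" for V
    proof -
      have "V (y(m := t)) k = V (y'(m := t)) k" for t
        using that agree unfolding triangular_def by simp
      moreover have "y m = y' m" using agree False \<open>m \<in> {1..n}\<close> by simp
      ultimately show ?thesis unfolding pdiff_def by simp
    qed
    moreover have "A y m = A y' m" "B y m = B y' m"
      using A B agree False unfolding triangular_def by auto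
    ultimately show ?thesis using A B by simp
  qed
  then show "lie_bracket n A B y k = lie_bracket n A B y' k"
    unfolding lie_bracket_def by (intro sum.cong) auto
qed

lemma lie_bracket_at_vanishing_below:
  assumes b: "b \<in> {1..n}" and y: "y \<in> vanishing_below b"
    and B: "\<And>z. z \<in> vanishing_below b \<Longrightarrow> B z = basis_point b"
    and A: "\<And>k. 1 \<le> k \<Longrightarrow> k < b \<Longrightarrow> A y k = 0"
  shows "lie_bracket n A B y m = - pdiff b (\<lambda>z. A z m) y"
proof -
  have "A y k * pdiff k (\<lambda>z. B z m) y - B y k * pdiff k (\<lambda>z. A z m) y
      = (if k = b then - pdiff b (\<lambda>z. A z m) y else 0)" if "k \<in> {1..n}" for k
  proof (cases "k < b")
    case True
    then show ?thesis using A that B[OF y] by (simp add: basis_point_def)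
  next
    case False
    have "pdiff k (\<lambda>z. B z m) y = 0"
      by (rule pdiff_eq_0_if_const[where c = "basis_point b m"])
        (use fun_upd_in_vanishing_below[OF y, of k] False in \<open>simp add: B\<close>)
    then show ?thesis using B[OF y] by (simp add: basis_point_def)
  qed
  then have "lie_bracket n A B y m = (\<Sum>k=1..n. if k = b then - pdiff b (\<lambda>z. A z m) y else 0)"
    unfolding lie_bracket_def by (intro sum.cong) auto
  then show ?thesis using b by simp
qed

definition integral_curve :: "vfield \<Rightarrow> real set \<Rightarrow> (real \<Rightarrow> point) \<Rightarrow> bool" where
  "integral_curve V S \<gamma> \<longleftrightarrow>
     (\<forall>\<tau>\<in>S. \<forall>k. ((\<lambda>\<sigma>. \<gamma> \<sigma> k) has_real_derivative V (\<gamma> \<tau>) k) (at \<tau> within S))"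

lemma flow_eqI:
  assumes "\<gamma> 0 = p" "integral_curve V {min 0 t..max 0 t} \<gamma>"
    and "\<And>\<gamma>'. \<gamma>' 0 = p \<Longrightarrow> integral_curve V {min 0 t..max 0 t} \<gamma>' \<Longrightarrow> \<gamma>' t = \<gamma> t"
  shows "flow V t p = \<gamma> t"
  unfolding flow_def using assms unfolding integral_curve_def by (intro the_equality) blast+

lemma triangular_integral_curve_unique:
  assumes V: "triangular V" and S: "convex S" "t\<^sub>0 \<in> S"
    and curves: "integral_curve V S \<gamma>" "integral_curve V S \<gamma>'" and start: "\<gamma> t\<^sub>0 = \<gamma>' t\<^sub>0"
    and "\<sigma> \<in> S"
  shows "\<gamma> \<sigma> = \<gamma>' \<sigma>"
proof -
  have "\<forall>\<sigma>\<in>S. \<gamma> \<sigma> k = \<gamma>' \<sigma> k" for k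
  proof (induction k rule: less_induct)
    case (less k)
    have "((\<lambda>\<sigma>. \<gamma> \<sigma> k - \<gamma>' \<sigma> k) has_real_derivative 0) (at \<tau> within S)" if "\<tau> \<in> S" for \<tau>
    proof -
      have "V (\<gamma> \<tau>) k = V (\<gamma>' \<tau>) k"
        using V less.IH that unfolding triangular_def by auto
      moreover have "((\<lambda>\<sigma>. \<gamma> \<sigma> k) has_real_derivative V (\<gamma> \<tau>) k) (at \<tau> within S)"
        and "((\<lambda>\<sigma>. \<gamma>' \<sigma> k) has_real_derivative V (\<gamma>' \<tau>) k) (at \<tau> within S)"
        using curves that unfolding integral_curve_def by auto
      ultimately show ?thesis using DERIV_diff by fastforce
    qed
    then obtain c where c: "\<forall>\<sigma>\<in>S. \<gamma> \<sigma> k - \<gamma>' \<sigma> k = c"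
      using has_field_derivative_zero_constant[OF S(1)] by blast
    then have "c = 0" using S(2) start by force
    then show ?case using c by simp
  qed
  then show ?thesis using \<open>\<sigma> \<in> S\<close> by auto
qed

lemma flow_eq_translation:
  assumes V: "triangular V" "\<And>y. y \<in> vanishing_below i \<Longrightarrow> V y = basis_point i"
    and p: "p \<in> vanishing_below i"
  shows "flow V t p = p(i := p i + t)"
proof -
  define \<gamma> where "\<gamma> \<sigma> = p(i := p i + \<sigma>)" for \<sigma>
  have curve: "integral_curve V S \<gamma>" for S
    unfolding integral_curve_def
  proof (intro ballI allI)
    fix \<tau> k
    have "V (\<gamma> \<tau>) = basis_point i"
      using V(2) fun_upd_in_vanishing_below[OF p] by (simp add: \<gamma>_def)
    then show "((\<lambda>\<sigma>. \<gamma> \<sigma> k) has_real_derivative V (\<gamma> \<tau>) k) (at \<tau> within S)"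
      by (cases "k = i") (auto simp: \<gamma>_def basis_point_def intro!: derivative_eq_intros)
  qed
  have "flow V t p = \<gamma> t"
  proof (rule flow_eqI[OF _ curve])
    fix \<gamma>' assume \<gamma>': "\<gamma>' 0 = p" "integral_curve V {min 0 t..max 0 t} \<gamma>'"
    show "\<gamma>' t = \<gamma> t"
    proof (rule triangular_integral_curve_unique[OF V(1) _ _ \<gamma>'(2) curve])
      show "\<gamma>' 0 = \<gamma> 0" by (simp add: \<gamma>'(1) \<gamma>_def)
    qed auto
  qed (simp add: \<gamma>_def)
  then show ?thesis by (simp add: \<gamma>_def)
qed

definition signed_monomial :: "nat set \<Rightarrow> (nat \<Rightarrow> nat) \<Rightarrow> point \<Rightarrow> real" where
  "signed_monomial J E y = (\<Prod>j\<in>J. (-1) ^ E j * y j ^ E j / fact (E j))"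

lemma signed_monomial_eq:
  "signed_monomial J E y = (-1) ^ (\<Sum>j\<in>J. E j) / (\<Prod>j\<in>J. fact (E j)) * (\<Prod>j\<in>J. y j ^ E j)"
  by (simp only: signed_monomial_def prod_dividef prod.distrib power_sum times_divide_eq_left)

lemma signed_monomial_cong:
  assumes "\<And>j. j \<in> J \<Longrightarrow> 0 < E j \<Longrightarrow> y j = y' j"
  shows "signed_monomial J E y = signed_monomial J E y'"
  unfolding signed_monomial_def
proof (rule prod.cong)
  show "(-1) ^ E j * y j ^ E j / fact (E j) = (-1) ^ E j * y' j ^ E j / fact (E j)"
    if "j \<in> J" for j
    using assms[OF that] by (cases "E j") auto
qed simp

lemma signed_monomial_eq_0:
  "finite J \<Longrightarrow> j \<in> J \<Longrightarrow> 0 < E j \<Longrightarrow> y j = 0 \<Longrightarrow> signed_monomial J E y = 0"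
  unfolding signed_monomial_def by (rule prod_zero) auto

lemma signed_monomial_0 [simp]: "signed_monomial J (\<lambda>_. 0) y = 1"
  by (simp add: signed_monomial_def)

lemma has_real_derivative_signed_monomial:
  assumes "finite J" "b \<in> J" "E b = Suc k"
  shows "((\<lambda>t. signed_monomial J E (y(b := t))) has_real_derivative
           - signed_monomial J (E(b := k)) y) (at (y b))"
proof -
  define rest where "rest = signed_monomial (J - {b}) E y"
  define c where "c = (-1) ^ Suc k / fact (Suc k) * rest"
  have split: "signed_monomial J F z
      = (-1) ^ F b * z b ^ F b / fact (F b) * signed_monomial (J - {b}) F z" for F z
    unfolding signed_monomial_def using assms by (simp add: prod.remove)
  have rest_upd: "signed_monomial (J - {b}) F (z(b := t)) = signed_monomial (J - {b}) F z" for F z t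
    by (rule signed_monomial_cong) simp
  have curve: "signed_monomial J E (y(b := t)) = t ^ Suc k * c" for t
    using split[of E "y(b := t)"] rest_upd assms(3) by (simp add: rest_def c_def)
  have "signed_monomial (J - {b}) (E(b := k)) y = rest"
    unfolding rest_def by (simp add: signed_monomial_def)
  then have target: "signed_monomial J (E(b := k)) y = (-1) ^ k * y b ^ k / fact k * rest"
    using split[of "E(b := k)" y] by simp
  have "((\<lambda>t. t ^ Suc k * c) has_real_derivative of_nat (Suc k) * (1 * y b ^ k) * c) (at (y b))"
    using DERIV_cmult_right[OF DERIV_power[OF DERIV_ident, of "Suc k"], of c]
    by (simp only: diff_Suc_Suc diff_zero)
  also have "of_nat (Suc k) * (1 * y b ^ k) * c = - ((-1) ^ k * y b ^ k / fact k * rest)"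
    by (simp add: c_def fact_Suc del: of_nat_Suc)
  finally show ?thesis unfolding curve target .
qed

lemma sorted_filter_less_eq_takeWhile:
  "sorted xs \<Longrightarrow> filter (\<lambda>x. x < c) xs = takeWhile (\<lambda>x. x < c) xs"
proof (induction xs)
  case (Cons x xs)
  show ?case
  proof (cases "x < c")
    case False
    with Cons.prems have "\<forall>y\<in>set xs. \<not> y < c" by auto
    with False show ?thesis by (simp add: filter_empty_conv)
  qed (use Cons in auto)
qed simp

declare hall_string.simps [simp del]

locale hall =
  fixes r s n :: nat and P :: "nat \<Rightarrow> nat \<times> nat"
  assumes hall_basis: "hall_basis r s n P"
begin

abbreviation str :: "nat \<Rightarrow> nat list" where "str \<equiv> hall_string r P"
abbreviation ind :: "nat \<Rightarrow> nat \<Rightarrow> nat" where "ind \<equiv> hall_I r P"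
abbreviation left_factor :: "nat \<Rightarrow> nat" where "left_factor l \<equiv> fst (P l)"
abbreviation right_factor :: "nat \<Rightarrow> nat" where "right_factor l \<equiv> snd (P l)"

lemma r_le_n: "r \<le> n"
  using hall_basis unfolding hall_basis_def by auto

lemma inj_on_P: "inj_on P {r<..n}"
  using hall_basis unfolding hall_basis_def bij_betw_def by auto

lemma factors_less:
  assumes "r < l" "l \<le> n"
  shows "1 \<le> right_factor l" "right_factor l < left_factor l" "left_factor l < l"
proof -
  have "P l \<in> hall_pairs r s n P"
    using hall_basis assms unfolding hall_basis_def bij_betw_def by auto
  then show "1 \<le> right_factor l" unfolding hall_pairs_def by auto
  show "right_factor l < left_factor l" "left_factor l < l"
    using hall_basis assms unfolding hall_basis_def by auto
qed

lemma right_factor_left_factor_le: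
  assumes "r < l" "l \<le> n" "r < left_factor l"
  shows "right_factor (left_factor l) \<le> right_factor l"
proof -
  have "P l \<in> hall_pairs r s n P"
    using hall_basis assms unfolding hall_basis_def bij_betw_def by auto
  then show ?thesis using assms(3) unfolding hall_pairs_def by auto
qed

lemma str_generator: "l \<le> r \<Longrightarrow> str l = [l]"
  by (subst hall_string.simps) simp

lemma str_bracket: "r < l \<Longrightarrow> l \<le> n \<Longrightarrow> str l = str (left_factor l) @ [right_factor l]"
  using factors_less[of l] by (subst hall_string.simps) simp

lemma str_nonempty: "l \<le> n \<Longrightarrow> str l \<noteq> []"
  by (cases "l \<le> r") (simp_all add: str_generator str_bracket)

lemma hd_str_bracket: "r < l \<Longrightarrow> l \<le> n \<Longrightarrow> hd (str l) = hd (str (left_factor l))"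
  using str_nonempty[of "left_factor l"] factors_less[of l] by (simp add: str_bracket)

lemma tl_str_bracket:
  "r < l \<Longrightarrow> l \<le> n \<Longrightarrow> tl (str l) = tl (str (left_factor l)) @ [right_factor l]"
  using str_nonempty[of "left_factor l"] factors_less[of l] by (simp add: str_bracket)

lemma tl_str_bounds: "l \<le> n \<Longrightarrow> q \<in> set (tl (str l)) \<Longrightarrow> 1 \<le> q \<and> q < l"
proof (induction l rule: less_induct)
  case (less l)
  show ?case
  proof (cases "l \<le> r")
    case True
    then show ?thesis using less.prems by (simp add: str_generator)
  next
    case False
    then show ?thesis
      using less.IH[of "left_factor l"] less.prems factors_less[of l]
      by (auto simp: tl_str_bracket)
  qed
qed

text \<open>The Hall condition on \<open>[X\<^sub>h, X\<^sub>k]\<close> with \<open>k \<le> j\<close> is what makes Hall strings sorted after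
  their first letter.\<close>

lemma tl_str_left_factor_le:
  "r < l \<Longrightarrow> l \<le> n \<Longrightarrow> q \<in> set (tl (str (left_factor l))) \<Longrightarrow> q \<le> right_factor l"
proof (induction l rule: less_induct)
  case (less l)
  define a where "a = left_factor l"
  have "r < a"
  proof (rule ccontr)
    assume "\<not> r < a"
    then have "tl (str a) = []" by (simp add: str_generator)
    then show False using less.prems by (simp add: a_def)
  qed
  moreover have "right_factor a \<le> right_factor l"
    using \<open>r < a\<close> less.prems right_factor_left_factor_le[of l] by (simp add: a_def)
  moreover have "q \<le> right_factor a"
    using \<open>r < a\<close> less.IH[of a] less.prems factors_less[of l] by (auto simp: a_def tl_str_bracket)
  ultimately show ?case by simp
qed

lemma sorted_tl_str: "l \<le> n \<Longrightarrow> sorted (tl (str l))"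
proof (induction l rule: less_induct)
  case (less l)
  show ?case
  proof (cases "l \<le> r")
    case True
    then show ?thesis by (simp add: str_generator)
  next
    case False
    then show ?thesis
      using less factors_less[of l] tl_str_left_factor_le[of l]
      by (auto simp: tl_str_bracket sorted_append)
  qed
qed

lemma str_inj: "l \<le> n \<Longrightarrow> l' \<le> n \<Longrightarrow> str l = str l' \<Longrightarrow> l = l'"
proof (induction l arbitrary: l' rule: less_induct)
  case (less l)
  have long: "2 \<le> length (str k)" if "r < k" "k \<le> n" for k
    using that str_nonempty[of "left_factor k"] factors_less[of k]
    by (simp add: str_bracket Suc_le_eq)
  consider "l \<le> r" "l' \<le> r" | "r < l" "r < l'" | "l \<le> r \<longleftrightarrow> r < l'"
    by linarith
  then show ?case
  proof cases
    case 1
    then show ?thesis using less.prems by (simp add: str_generator)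
  next
    case 2
    then have "str (left_factor l) = str (left_factor l')" "right_factor l = right_factor l'"
      using less.prems by (simp_all add: str_bracket)
    moreover have "left_factor l = left_factor l'"
      using less.IH[OF _ _ _ calculation(1)] factors_less[of l] factors_less[of l'] 2 less.prems
      by simp
    ultimately have "P l = P l'" by (simp add: prod_eq_iff)
    then show ?thesis using inj_on_P 2 less.prems by (auto simp: inj_on_def)
  next
    case 3
    then show ?thesis using less.prems long[of l] long[of l']
      by (auto simp: str_generator dest!: arg_cong[where f = length])
  qed
qed

lemma str_append_hd_less:
  "m \<le> n \<Longrightarrow> l \<le> n \<Longrightarrow> str m = str l @ z \<Longrightarrow> z \<noteq> [] \<Longrightarrow> hd z < l"
proof (induction m arbitrary: z rule: less_induct)
  case (less m)
  show ?case
  proof (cases "m \<le> r")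
    case True
    then show ?thesis using less.prems str_nonempty[of l] by (cases "str l") (auto simp: str_generator)
  next
    case False
    define a b where "a = left_factor m" and "b = right_factor m"
    have ab: "b < a" "a < m" using factors_less[of m] False less.prems unfolding a_def b_def by auto
    obtain z' where z: "z = z' @ [b]" and a: "str a = str l @ z'"
      using less.prems(3,4) str_bracket[of m] False less.prems(1) unfolding a_def b_def
      by (cases z rule: rev_cases) auto
    show ?thesis
    proof (cases "z' = []")
      case True
      then have "a = l" using a str_inj[of a l] ab less.prems by simp
      then show ?thesis using z True ab by simp
    next
      case False
      then show ?thesis using less.IH[OF ab(2) _ _ a] z ab less.prems by simp
    qed
  qed
qed

lemma ind_eq_count: "ind l j = count (mset (tl (str l))) j"
proof -
  have "length (filter (\<lambda>q. q = j) xs) = count_list xs j" for xs :: "nat list"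
    by (induction xs) auto
  then show ?thesis by (simp add: hall_I_def count_mset)
qed

lemma ind_generator: "l \<le> r \<Longrightarrow> ind l j = 0"
  by (simp add: hall_I_def str_generator)

lemma ind_bracket:
  "r < l \<Longrightarrow> l \<le> n \<Longrightarrow> ind l j = ind (left_factor l) j + (if j = right_factor l then 1 else 0)"
  by (simp add: ind_eq_count tl_str_bracket)

lemma ind_pos_bounds: "l \<le> n \<Longrightarrow> 0 < ind l j \<Longrightarrow> 1 \<le> j \<and> j < l"
  using tl_str_bounds by (auto simp: ind_eq_count)

lemma eq_if_ind_eq_below:
  assumes "l \<le> n" "m \<le> n" "hd (str m) = hd (str l)"
    and below: "\<And>j. 1 \<le> j \<Longrightarrow> j < l \<Longrightarrow> ind m j = ind l j"
  shows "m = l"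
proof -
  define t u where "t = tl (str m)" and "u = tl (str l)"
  have "mset (filter (\<lambda>q. q < l) t) = mset u"
  proof (rule multiset_eqI)
    fix j
    show "count (mset (filter (\<lambda>q. q < l) t)) j = count (mset u) j"
    proof (cases "1 \<le> j \<and> j < l")
      case True
      then show ?thesis using below[of j] by (simp add: t_def u_def ind_eq_count)
    next
      case False
      then have "j \<notin> set u" "j \<notin> set (filter (\<lambda>q. q < l) t)"
        using tl_str_bounds[of l j] tl_str_bounds[of m j] assms(1,2) by (auto simp: t_def u_def)
      then show ?thesis by (simp only: count_mset_0_iff[symmetric])
    qed
  qed
  moreover have "sorted t" "sorted u"
    using sorted_tl_str assms(1,2) by (simp_all add: t_def u_def)
  ultimately have "filter (\<lambda>q. q < l) t = u"
    using properties_for_sort[of "filter (\<lambda>q. q < l) t" u] sorted_sort_id[of u]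
    by (simp add: sorted_wrt_filter)
  then have "takeWhile (\<lambda>q. q < l) t = u"
    using sorted_filter_less_eq_takeWhile[OF \<open>sorted t\<close>] by simp
  then have "str m = str l @ dropWhile (\<lambda>q. q < l) t"
    using str_nonempty assms(1-3) unfolding t_def u_def
    by (metis append_Cons list.collapse takeWhile_dropWhile_id)
  moreover have "dropWhile (\<lambda>q. q < l) t = []"
    using str_append_hd_less[OF assms(2,1) calculation] hd_dropWhile by blast
  ultimately show ?thesis using str_inj assms(1,2) by simp
qed

definition ind_le :: "nat \<Rightarrow> nat \<Rightarrow> bool" where
  "ind_le l m \<longleftrightarrow> m \<in> {1..n} \<and> hd (str m) = hd (str l) \<and> (\<forall>j\<in>{1..n}. ind l j \<le> ind m j)"

text \<open>The closed form that differentiating the coefficients of the generator fields along the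
  Hall string of \<open>l\<close> would produce: the \<open>\<partial>\<^sub>m\<close> component is
  \<open>(-1)\<^bsup>|I(m)-I(l)|\<^esup> x\<^bsup>I(m)-I(l)\<^esup> / (I(m)-I(l))!\<close>.\<close>

definition monomial_field :: "nat \<Rightarrow> vfield" where
  "monomial_field l y m =
     (if ind_le l m then signed_monomial {1..n} (\<lambda>j. ind m j - ind l j) y else 0)"

lemma hgg_gen_eq_monomial_field:
  assumes l: "l \<in> {1..r}"
  shows "hgg_gen r n P l = monomial_field l"
proof (intro ext)
  fix y m
  have "hall_prec r P l m \<longleftrightarrow> hd (str m) = l" if "m \<le> n"
    using str_nonempty[OF that] l by (cases "str m") (auto simp: hall_prec_def str_generator)
  then show "hgg_gen r n P l y m = monomial_field l y m"
    using l r_le_n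
    by (auto simp: hgg_gen_def monomial_field_def ind_le_def ind_generator str_generator
        signed_monomial_eq)
qed

lemma monomial_field_support:
  assumes "l \<le> n" "monomial_field l y m \<noteq> 0" "m \<noteq> l"
  obtains j where "1 \<le> j" "j < l" "j < m" "y j \<noteq> 0"
proof -
  have le: "ind_le l m" and nz: "signed_monomial {1..n} (\<lambda>j. ind m j - ind l j) y \<noteq> 0"
    using assms(2) by (auto simp: monomial_field_def split: if_splits)
  obtain j where j: "1 \<le> j" "j < l" "ind m j \<noteq> ind l j"
    using eq_if_ind_eq_below[of l m] le assms(1,3) unfolding ind_le_def by auto
  moreover have "ind l j \<le> ind m j" using le j assms(1) unfolding ind_le_def by auto
  ultimately have "ind l j < ind m j" by simp
  then have "j < m" "y j \<noteq> 0"
    using ind_pos_bounds[of m j] signed_monomial_eq_0[of "{1..n}" j] nz le j assms(1)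
    by (auto simp: ind_le_def)
  then show thesis using that j by blast
qed

lemma monomial_field_vanishing_below:
  assumes "1 \<le> l" "l \<le> n" "y \<in> vanishing_below l"
  shows "monomial_field l y = basis_point l"
proof
  fix m
  show "monomial_field l y m = basis_point l m"
  proof (cases "m = l")
    case True
    then show ?thesis using assms by (simp add: monomial_field_def ind_le_def basis_point_def)
  next
    case False
    then show ?thesis
      using monomial_field_support[OF assms(2) _ False] assms(3)
      by (auto simp: vanishing_below_def basis_point_def)
  qed
qed

lemma monomial_field_below_eq_0:
  "l \<le> n \<Longrightarrow> k < l \<Longrightarrow> y \<in> vanishing_below k \<Longrightarrow> monomial_field l y k = 0"
  using monomial_field_support[of l y k] by (auto simp: vanishing_below_def)

lemma triangular_monomial_field: "triangular (monomial_field l)"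
  unfolding triangular_def
proof (intro allI impI)
  fix k and y y' :: point
  assume "\<forall>j. 1 \<le> j \<and> j < k \<longrightarrow> y j = y' j"
  then show "monomial_field l y k = monomial_field l y' k"
    using ind_pos_bounds[of k]
    by (auto simp: monomial_field_def ind_le_def intro!: signed_monomial_cong)
qed

lemma pdiff_monomial_field:
  assumes l: "r < l" "l \<le> n"
  shows "pdiff (right_factor l) (\<lambda>z. monomial_field (left_factor l) z m) y = - monomial_field l y m"
proof -
  define a b where "a = left_factor l" and "b = right_factor l"
  define E where "E j = ind m j - ind a j" for j
  have b: "b \<in> {1..n}" using factors_less[OF l] l by (auto simp: b_def)
  have ind_l: "ind l j = ind a j + (if j = b then 1 else 0)" for j
    using ind_bracket[OF l] by (simp add: a_def b_def)
  have "(\<forall>j\<in>{1..n}. ind l j \<le> ind m j) \<longleftrightarrow>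
      (\<forall>j\<in>{1..n}. ind a j \<le> ind m j) \<and> ind a b < ind m b"
  proof
    assume le_m: "\<forall>j\<in>{1..n}. ind l j \<le> ind m j"
    then have "ind a j \<le> ind m j" if "j \<in> {1..n}" for j using that ind_l[of j] by fastforce
    moreover have "ind a b < ind m b" using le_m b ind_l[of b] by fastforce
    ultimately show "(\<forall>j\<in>{1..n}. ind a j \<le> ind m j) \<and> ind a b < ind m b" by blast
  qed (use ind_l in auto)
  then have le_iff: "ind_le l m \<longleftrightarrow> ind_le a m \<and> 0 < E b"
    using hd_str_bracket[OF l] unfolding ind_le_def E_def a_def by auto
  consider (zero) "\<not> ind_le a m" | (const) "ind_le a m" "E b = 0"
    | (deriv) k where "ind_le a m" "E b = Suc k"
    using not0_implies_Suc by blast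
  then have "pdiff b (\<lambda>z. monomial_field a z m) y = - monomial_field l y m"
  proof cases
    case zero
    then show ?thesis using le_iff by (simp add: monomial_field_def pdiff_def)
  next
    case const
    have "monomial_field a (y(b := t)) m = monomial_field a y m" for t
      unfolding monomial_field_def using const
      by (auto simp: E_def intro!: signed_monomial_cong)
    then show ?thesis
      using pdiff_eq_0_if_const le_iff const by (simp add: monomial_field_def)
  next
    case deriv
    have "(\<lambda>j. ind m j - ind l j) = E(b := k)"
      using deriv ind_l by (auto simp: E_def fun_eq_iff)
    then have "((\<lambda>t. monomial_field a (y(b := t)) m) has_real_derivative - monomial_field l y m)
        (at (y b))"
      using has_real_derivative_signed_monomial[of "{1..n}" b E k y] deriv b le_iff
      by (simp add: monomial_field_def E_def[abs_def])
    then show ?thesis by (rule pdiff_eqI)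
  qed
  then show ?thesis by (simp add: a_def b_def)
qed

text \<open>\<open>X\<^sub>l\<close> agrees with \<open>monomial_field l\<close> where the coordinates below \<open>agreement_index l\<close>
  vanish: for \<open>X\<^sub>l = [X\<^sub>a, X\<^sub>b]\<close> this is where \<open>X\<^sub>b\<close> is the constant field \<open>\<partial>\<^sub>b\<close>.\<close>

definition agreement_index :: "nat \<Rightarrow> nat" where
  "agreement_index l = (if l \<le> r then 1 else right_factor l)"

lemma agreement_index_le: "1 \<le> l \<Longrightarrow> l \<le> n \<Longrightarrow> agreement_index l \<le> l"
  using factors_less[of l] by (auto simp: agreement_index_def)

lemma agreement_index_left_factor_le:
  "r < l \<Longrightarrow> l \<le> n \<Longrightarrow> agreement_index (left_factor l) \<le> right_factor l"
  using factors_less[of l] right_factor_left_factor_le[of l] by (auto simp: agreement_index_def)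

end

locale hgg = hall +
  fixes X :: "nat \<Rightarrow> vfield"
  assumes hgg_fields: "hgg_fields r n P X"
begin

lemma X_generator: "l \<in> {1..r} \<Longrightarrow> X l = monomial_field l"
  using hgg_fields hgg_gen_eq_monomial_field by (simp add: hgg_fields_def)

lemma X_bracket:
  "r < l \<Longrightarrow> l \<le> n \<Longrightarrow> X l = lie_bracket n (X (left_factor l)) (X (right_factor l))"
  using hgg_fields by (simp add: hgg_fields_def)

lemma triangular_X: "1 \<le> l \<Longrightarrow> l \<le> n \<Longrightarrow> triangular (X l)"
proof (induction l rule: less_induct)
  case (less l)
  show ?case
  proof (cases "l \<le> r")
    case True
    then show ?thesis using less.prems X_generator triangular_monomial_field by simp
  next
    case False
    then show ?thesis
      using less factors_less[of l] X_bracket[of l] by (simp add: triangular_lie_bracket)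
  qed
qed

lemma X_eq_monomial_field:
  "1 \<le> l \<Longrightarrow> l \<le> n \<Longrightarrow> y \<in> vanishing_below (agreement_index l) \<Longrightarrow>
    X l y = monomial_field l y"
proof (induction l arbitrary: y rule: less_induct)
  case (less l)
  show ?case
  proof (cases "l \<le> r")
    case True
    then show ?thesis using less.prems X_generator by simp
  next
    case False
    define a b where "a = left_factor l" and "b = right_factor l"
    have ab: "1 \<le> b" "b < a" "a < l" "a \<le> n"
      using factors_less[of l] False less.prems by (auto simp: a_def b_def)
    have y: "y \<in> vanishing_below b"
      using less.prems False by (simp add: agreement_index_def b_def)
    have Xa: "X a z = monomial_field a z" if "z \<in> vanishing_below b" for z
      using less.IH[of a z] ab that vanishing_below_antimono agreement_index_left_factor_le[of l]
        False less.prems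
      by (auto simp: a_def b_def)
    have Xb: "X b z = basis_point b" if "z \<in> vanishing_below b" for z
      using less.IH[of b z] ab that vanishing_below_antimono[OF agreement_index_le[of b]]
        monomial_field_vanishing_below[of b z] less.prems
      by auto
    have Xl: "X l = lie_bracket n (X a) (X b)"
      using X_bracket[of l] False less.prems by (simp add: a_def b_def)
    show ?thesis
    proof
      fix m
      have "X l y m = - pdiff b (\<lambda>z. X a z m) y"
        unfolding Xl
      proof (rule lie_bracket_at_vanishing_below[OF _ y Xb])
        show "b \<in> {1..n}" using ab by simp
        show "X a y k = 0" if "1 \<le> k" "k < b" for k
          using Xa[OF y] monomial_field_below_eq_0[of a k y] that ab
            vanishing_below_antimono[of k b] y
          by auto
      qed
      also have "pdiff b (\<lambda>z. X a z m) y = pdiff b (\<lambda>z. monomial_field a z m) y"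
        by (rule pdiff_cong) (simp add: Xa fun_upd_in_vanishing_below[OF y])
      also have "\<dots> = - monomial_field l y m"
        using pdiff_monomial_field[of l m y] False less.prems by (simp add: a_def b_def)
      finally show "X l y m = monomial_field l y m" by simp
    qed
  qed
qed

lemma X_vanishing_below:
  "1 \<le> l \<Longrightarrow> l \<le> n \<Longrightarrow> y \<in> vanishing_below l \<Longrightarrow> X l y = basis_point l"
  using X_eq_monomial_field vanishing_below_antimono[OF agreement_index_le[of l]]
    monomial_field_vanishing_below
  by auto

lemma flow_X:
  "1 \<le> l \<Longrightarrow> l \<le> n \<Longrightarrow> p \<in> vanishing_below l \<Longrightarrow> flow (X l) t p = p(l := p l + t)"
  by (rule flow_eq_translation) (simp_all add: triangular_X X_vanishing_below)

lemma foldr_flows: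
  assumes "1 \<le> i" "i \<le> n + 1"
  shows "foldr (\<lambda>i p. flow (X i) (x i) p) [i..<n+1] (\<lambda>_. 0) =
    (\<lambda>j. if i \<le> j \<and> j \<le> n then x j else 0)"
  using assms(2,1)
proof (induction i rule: inc_induct)
  case (step k)
  define p where "p = (\<lambda>j. if Suc k \<le> j \<and> j \<le> n then x j else 0)"
  have "foldr (\<lambda>i p. flow (X i) (x i) p) [k..<n+1] (\<lambda>_. 0) = flow (X k) (x k) p"
    using step by (simp add: upt_conv_Cons p_def del: upt_Suc)
  also have "\<dots> = p(k := p k + x k)"
    using step by (intro flow_X) (auto simp: p_def vanishing_below_def)
  also have "\<dots> = (\<lambda>j. if k \<le> j \<and> j \<le> n then x j else 0)"
    using step by (auto simp: p_def)
  finally show ?case .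
qed (simp add: fun_eq_iff)

end

theorem proposition3p5:
  fixes r s n :: nat and P :: "nat \<Rightarrow> nat \<times> nat" and X :: "nat \<Rightarrow> vfield"
    and x :: point
  assumes "2 \<le> r" and "2 \<le> s"
    and "hall_basis r s n P"
    and "hgg_fields r n P X"
  shows "\<forall>l\<in>{1..n}. hgg_Psi n X x l = x l"
proof -
  interpret hgg r s n P X
    using assms(3,4) by unfold_locales
  show ?thesis
    unfolding hgg_Psi_def using foldr_flows[of 1 x] by (simp del: upt_Suc)
qed

end
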